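(* Let $d\in\mathbb N$ and let $\rho:SL(2,\mathbb Z)\to GL(d,\mathbb C)$ be a representation such that $\rho(T)$ is diagonalisable with eigenvalues $\lambda_1,\dots,\lambda_d$ (with multiplicity), where $T=\begin{pmatrix}1&1\\0&1\end{pmatrix}$. If no product $\prod_{i\in I}\lambda_i$ over a non-empty proper subset $I\subsetneq\{1,\dots,d\}$ is a $12$th root of unity, then $\rho$ is irreducible. *)

theory Defs
  imports "HOL-Analysis.Analysis"
begin

definition SL2Z :: "(int^2^2) set" where
  "SL2Z = {A. det A = 1}"

definition T_mat :: "int^2^2" where
  "T_mat = vector [vector [1, 1], vector [0, 1]]"

definition is_rep :: "(int^2^2 \<Rightarrow> complex^'n^'n) \<Rightarrow> bool" where
  "is_rep \<rho> \<longleftrightarrow>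
     (\<forall>A\<in>SL2Z. invertible (\<rho> A)) \<and>
     (\<forall>A\<in>SL2Z. \<forall>B\<in>SL2Z. \<rho> (A ** B) = \<rho> A ** \<rho> B)"

definition irreducible_rep :: "(int^2^2 \<Rightarrow> complex^'n^'n) \<Rightarrow> bool" where
  "irreducible_rep \<rho> \<longleftrightarrow>
     (\<forall>W. vec.subspace W \<and> (\<forall>g\<in>SL2Z. \<forall>w\<in>W. \<rho> g *v w \<in> W)
        \<longrightarrow> W = {0} \<or> W = UNIV)"

end

theory Submission
  imports Defs
begin

text \<open>A nonzero proper subspace \<open>W\<close> invariant under \<open>\<rho>\<close> gives the character
  \<open>\<psi>(g) = det (\<rho>(g)|\<^sub>W)\<close> of \<open>SL(2,\<int>)\<close>. Since \<open>S\<^sup>4 = 1\<close> and \<open>S\<^sup>2 = (ST)\<^sup>3\<close> for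
  \<open>S = [[0,-1],[1,0]]\<close>, every character satisfies \<open>\<psi>(T)\<^sup>1\<^sup>2 = 1\<close>. On the other hand, in an
  eigenbasis of \<open>\<rho>(T)\<close> complete a basis of \<open>W\<close> by standard basis vectors \<open>e\<^sub>j\<close>, \<open>j \<notin> K\<close>,
  where \<open>|K| = dim W\<close>, so that \<open>K\<close> is nonempty and proper. The resulting change of basis \<open>B\<close>
  is block triangular, and so is every \<open>B\<^sup>-\<^sup>1 \<rho>(g) B\<close>; comparing \<open>K \<times> K\<close> blocks in
  \<open>B (B\<^sup>-\<^sup>1 \<rho>(T) B) = D B\<close> with \<open>D\<close> diagonal shows that \<open>\<psi>(T)\<close> is the product of the
  \<open>\<lambda>\<^sub>i\<close> with \<open>i \<in> K\<close>.\<close>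

lemma matrix_inv_right: "invertible A \<Longrightarrow> A ** matrix_inv A = mat 1"
  and matrix_inv_left: "invertible A \<Longrightarrow> matrix_inv A ** A = mat 1"
  for A :: "'a::semiring_1^'n^'n"
  unfolding invertible_def matrix_inv_def by (metis (mono_tags, lifting) someI_ex)+

definition coord_subspace :: "'n set \<Rightarrow> ('a::zero^'n) set" where
  "coord_subspace K = {v. \<forall>l. l \<notin> K \<longrightarrow> v $ l = 0}"

lemma span_axes:
  fixes K :: "'n::finite set"
  shows "vec.span ((\<lambda>k. axis k (1::'a::field)) ` K) = coord_subspace K"
proof
  show "vec.span ((\<lambda>k. axis k 1) ` K) \<subseteq> coord_subspace K"
    by (rule vec.span_minimal) (auto simp: coord_subspace_def vec.subspace_def axis_def)
next
  show "coord_subspace K \<subseteq> vec.span ((\<lambda>k. axis k (1::'a)) ` K)"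
  proof
    fix v :: "'a^'n" assume v: "v \<in> coord_subspace K"
    have "v = (\<Sum>i\<in>UNIV. v $ i *s axis i 1)" by (simp add: basis_expansion)
    also have "\<dots> = (\<Sum>i\<in>K. v $ i *s axis i 1)"
      using v by (intro sum.mono_neutral_right) (auto simp: coord_subspace_def)
    also have "\<dots> \<in> vec.span ((\<lambda>k. axis k 1) ` K)"
      by (intro vec.span_sum vec.span_scale vec.span_base imageI)
    finally show "v \<in> vec.span ((\<lambda>k. axis k 1) ` K)" .
  qed
qed

lemma coord_subspace_empty: "coord_subspace {} = {0}"
  by (auto simp: coord_subspace_def vec_eq_iff)

lemma coord_subspace_UNIV: "coord_subspace UNIV = UNIV"
  by (simp add: coord_subspace_def)

definition block_triangular :: "'n set \<Rightarrow> 'a::zero^'n^'n \<Rightarrow> bool" where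
  "block_triangular K M \<longleftrightarrow> (\<forall>l j. l \<notin> K \<longrightarrow> j \<in> K \<longrightarrow> M $ l $ j = 0)"

lemma block_triangularI_invariant:
  fixes M :: "'a::comm_ring_1^'n^'n"
  assumes "\<And>v. v \<in> coord_subspace K \<Longrightarrow> M *v v \<in> coord_subspace K"
  shows "block_triangular K M"
  unfolding block_triangular_def
proof (intro allI impI)
  fix l j assume "l \<notin> K" "j \<in> K"
  then have "axis j 1 \<in> coord_subspace K"
    by (auto simp: coord_subspace_def axis_def)
  then have "(M *v axis j 1) $ l = 0"
    using assms \<open>l \<notin> K\<close> by (auto simp: coord_subspace_def)
  then show "M $ l $ j = 0"
    by (simp add: matrix_vector_mult_def axis_def if_distrib cong: if_cong)
qed

text \<open>The \<open>K \<times> K\<close> block of \<open>M\<close>, padded by the identity outside \<open>K\<close>, so that its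
  determinant is that of the block.\<close>
definition principal_block :: "'n set \<Rightarrow> 'a::zero_neq_one^'n^'n \<Rightarrow> 'a^'n^'n" where
  "principal_block K M = (\<chi> i j. if i \<in> K \<and> j \<in> K then M $ i $ j else if i = j then 1 else 0)"

lemma principal_block_mat_1: "principal_block K (mat 1) = mat 1"
  by (simp add: principal_block_def mat_def vec_eq_iff)

lemma principal_block_mult:
  fixes M N :: "'a::comm_ring_1^'n^'n"
  assumes "\<And>i j l. i \<in> K \<Longrightarrow> j \<in> K \<Longrightarrow> l \<notin> K \<Longrightarrow> M $ i $ l * N $ l $ j = 0"
  shows "principal_block K (M ** N) = principal_block K M ** principal_block K N"
proof -
  have "(principal_block K M ** principal_block K N) $ i $ j = principal_block K (M ** N) $ i $ j"
    for i j
  proof (cases "i \<in> K \<and> j \<in> K")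
    case True
    then have "(principal_block K M ** principal_block K N) $ i $ j
        = (\<Sum>l\<in>UNIV. if l \<in> K then M $ i $ l * N $ l $ j else 0)"
      by (auto simp: matrix_matrix_mult_def principal_block_def intro!: sum.cong)
    also have "\<dots> = (M ** N) $ i $ j"
      using True assms by (auto simp: matrix_matrix_mult_def intro!: sum.cong)
    finally show ?thesis
      using True by (simp add: principal_block_def)
  next
    case False
    define l0 where "l0 = (if i \<in> K then j else i)"
    have "(principal_block K M ** principal_block K N) $ i $ j
        = (\<Sum>l\<in>UNIV. if l = l0 then principal_block K M $ i $ l0 * principal_block K N $ l0 $ j else 0)"
      unfolding matrix_matrix_mult_def vec_lambda_beta
      by (intro sum.cong) (use False in \<open>auto simp: principal_block_def l0_def\<close>)
    also have "\<dots> = principal_block K (M ** N) $ i $ j"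
      by (cases "i \<in> K") (use False in \<open>auto simp: principal_block_def l0_def\<close>)
    finally show ?thesis .
  qed
  then show ?thesis
    by (simp add: vec_eq_iff)
qed

lemma det_principal_block_mult:
  fixes M N :: "'a::comm_ring_1^'n^'n"
  assumes "block_triangular K N"
  shows "det (principal_block K (M ** N)) = det (principal_block K M) * det (principal_block K N)"
  using assms by (simp add: principal_block_mult block_triangular_def det_mul)

lemma det_principal_block_diagonal:
  "det (principal_block K (\<chi> i j. if i = j then lam i else 0)) = (\<Prod>i\<in>K. lam i)"
proof -
  have "det (principal_block K (\<chi> i j. if i = j then lam i else 0))
      = (\<Prod>i\<in>UNIV. if i \<in> K then lam i else 1)"
    by (subst det_diagonal) (auto simp: principal_block_def intro!: prod.cong)
  then show ?thesis
    by (simp add: prod.If_cases)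
qed

lemma det_principal_block_nonzero:
  fixes B :: "'a::field^'n^'n"
  assumes "invertible B" and "block_triangular (- K) B"
  shows "det (principal_block K B) \<noteq> 0"
proof -
  define Y :: "'a^'n^'n" where
    "Y = (\<chi> i j. if i \<in> K \<and> j \<in> K then (if i = j then 1 else 0) else B $ i $ j)"
  have "(principal_block K B ** Y) $ i $ j = B $ i $ j" for i j
  proof (cases "i \<in> K")
    case True
    have "(principal_block K B ** Y) $ i $ j = (\<Sum>l\<in>UNIV. if l = j then B $ i $ l else 0)"
      unfolding matrix_matrix_mult_def vec_lambda_beta
      by (intro sum.cong) (use True assms(2) in \<open>auto simp: principal_block_def Y_def block_triangular_def\<close>)
    then show ?thesis by simp
  next
    case False
    have "(principal_block K B ** Y) $ i $ j = (\<Sum>l\<in>UNIV. if l = i then Y $ l $ j else 0)"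
      unfolding matrix_matrix_mult_def vec_lambda_beta
      by (intro sum.cong) (use False in \<open>auto simp: principal_block_def\<close>)
    then show ?thesis
      using False by (simp add: Y_def)
  qed
  then have "B = principal_block K B ** Y"
    by (simp add: vec_eq_iff)
  then have "det B = det (principal_block K B) * det Y"
    by (metis det_mul)
  then show ?thesis
    using assms(1) by (auto simp: invertible_det_nz)
qed

lemma det_principal_block_similar_diagonal:
  fixes B N :: "'a::field^'n^'n"
  assumes "invertible B" "block_triangular (- K) B" "block_triangular K N"
    and "B ** N = (\<chi> i j. if i = j then lam i else 0) ** B"
  shows "det (principal_block K N) = (\<Prod>i\<in>K. lam i)"
proof -
  let ?D = "(\<chi> i j. if i = j then lam i else 0) :: 'a^'n^'n"
  have "principal_block K B ** principal_block K N = principal_block K (B ** N)"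
    using assms(3) by (auto simp: block_triangular_def intro!: principal_block_mult[symmetric])
  also have "\<dots> = principal_block K ?D ** principal_block K B"
    unfolding assms(4) by (rule principal_block_mult) auto
  finally have "det (principal_block K B) * det (principal_block K N)
      = det (principal_block K ?D) * det (principal_block K B)"
    by (simp only: det_mul[symmetric])
  then show ?thesis
    using det_principal_block_nonzero[OF assms(1,2)] by (simp add: det_principal_block_diagonal)
qed

lemma independent_extend_by_axes:
  fixes C :: "('a::field^'n) set"
  assumes "vec.independent C"
  obtains J where "vec.span (C \<union> (\<lambda>j. axis j 1) ` J) = UNIV" and "card C + card J = CARD('n)"
proof -
  obtain B where B: "C \<subseteq> B" "B \<subseteq> C \<union> cart_basis" "vec.independent B" "C \<union> cart_basis \<subseteq> vec.span B"
    using vec.maximal_independent_subset_extend[of C "C \<union> cart_basis"] assms by blast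
  define J where "J = {j. axis j 1 \<in> B - C}"
  have B_eq: "B = C \<union> (\<lambda>j. axis j 1) ` J"
    using B(1,2) by (auto simp: J_def cart_basis_def)
  have span_B: "vec.span B = UNIV"
    using B(4) by (metis Un_subset_iff span_cart_basis top.extremum_uniqueI vec.span_minimal vec.subspace_span)
  have "card B = CARD('n)"
    using vec.basis_card_eq_dim[of B UNIV] B(3) span_B vec.dim_UNIV card_cart_basis by auto
  moreover have "card B = card C + card J"
  proof -
    have "finite B" "C \<inter> (\<lambda>j. axis j 1) ` J = {}"
      using vec.finiteI_independent[OF B(3)] by (auto simp: J_def)
    moreover have "card ((\<lambda>j. axis j (1::'a)) ` J) = card J"
      by (rule card_image) (auto simp: inj_on_def axis_eq_axis)
    ultimately show ?thesis
      unfolding B_eq by (simp add: card_Un_disjoint)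
  qed
  ultimately show ?thesis
    using that span_B B_eq by simp
qed

lemma subspace_adapted_basis:
  fixes W :: "('a::field^'n) set"
  assumes "vec.subspace W"
  obtains B K where "invertible B" "block_triangular (- K) B" "(\<lambda>v. B *v v) ` coord_subspace K = W"
proof -
  obtain C where C: "C \<subseteq> W" "vec.independent C" "W \<subseteq> vec.span C"
    using vec.maximal_independent_subset by blast
  have span_C: "vec.span C = W"
    using vec.span_subspace[OF C(1,3) assms] .
  obtain J where J: "vec.span (C \<union> (\<lambda>j. axis j 1) ` J) = UNIV" "card C + card J = CARD('n)"
    using independent_extend_by_axes[OF C(2)] .
  define K where "K = - J"
  have "card K = card C"
    using J(2) card_Diff_subset[of J UNIV] by (simp add: K_def Compl_eq_Diff_UNIV)
  then obtain f where f: "bij_betw f K C"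
    using finite_same_card_bij[of K C] vec.finiteI_independent[OF C(2)] by auto
  define col where "col j = (if j \<in> K then f j else axis j 1)" for j
  define B :: "'a^'n^'n" where "B = (\<chi> i j. col j $ i)"
  have B_axis: "B *v axis j 1 = col j" for j
    by (simp add: B_def vec_eq_iff matrix_vector_mult_def axis_def if_distrib cong: if_cong)
  have col_K: "col ` K = C"
    using f by (simp add: col_def bij_betw_def)
  have "columns B = C \<union> (\<lambda>j. axis j 1) ` J"
  proof -
    have "columns B = col ` K \<union> col ` J"
      by (auto simp: columns_def column_def B_def K_def)
    also have "col ` J = (\<lambda>j. axis j 1) ` J"
      by (auto simp: col_def K_def)
    finally show ?thesis
      using col_K by simp
  qed
  then have "invertible B"
    using J(1) by (simp add: invertible_right_inverse matrix_right_invertible_span_columns)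
  moreover have "block_triangular (- K) B"
    by (auto simp: block_triangular_def B_def col_def K_def axis_def)
  moreover have "(\<lambda>v. B *v v) ` coord_subspace K = W"
  proof -
    have "(\<lambda>v. B *v v) ` coord_subspace K = vec.span ((\<lambda>v. B *v v) ` (\<lambda>k. axis k 1) ` K)"
      unfolding span_axes[symmetric] by (rule vec.linear_span_image[OF matrix_vector_mul_linear_gen, symmetric])
    also have "(\<lambda>v. B *v v) ` (\<lambda>k. axis k 1) ` K = C"
      using col_K by (auto simp: B_axis image_image)
    finally show ?thesis
      using span_C by simp
  qed
  ultimately show ?thesis
    using that by blast
qed

definition S_mat :: "int^2^2" where
  "S_mat = vector [vector [0, -1], vector [1, 0]]"

lemma S_mat_SL2Z: "S_mat \<in> SL2Z" and T_mat_SL2Z: "T_mat \<in> SL2Z"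
  by (auto simp: SL2Z_def det_2 S_mat_def T_mat_def)

lemma mat_1_SL2Z: "mat 1 \<in> SL2Z"
  by (simp add: SL2Z_def)

lemma SL2Z_mult: "A \<in> SL2Z \<Longrightarrow> B \<in> SL2Z \<Longrightarrow> A ** B \<in> SL2Z"
  by (simp add: SL2Z_def det_mul)

lemma matrix_matrix_mult_2:
  "((A :: 'a::semiring_1^2^2) ** B) $ i $ j = A $ i $ 1 * B $ 1 $ j + A $ i $ 2 * B $ 2 $ j"
  by (simp add: matrix_matrix_mult_def sum_2)

lemma S_mat_pow_4: "S_mat ** S_mat ** S_mat ** S_mat = mat 1"
  by (simp add: vec_eq_iff forall_2 matrix_matrix_mult_2 S_mat_def mat_def)

lemma S_mat_sq_eq_ST_cube: "S_mat ** S_mat = (S_mat ** T_mat) ** (S_mat ** T_mat) ** (S_mat ** T_mat)"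
  by (simp add: vec_eq_iff forall_2 matrix_matrix_mult_2 S_mat_def T_mat_def)

lemma SL2Z_character_T_pow_12:
  fixes \<psi> :: "int^2^2 \<Rightarrow> 'a::comm_monoid_mult"
  assumes mult: "\<And>A B. A \<in> SL2Z \<Longrightarrow> B \<in> SL2Z \<Longrightarrow> \<psi> (A ** B) = \<psi> A * \<psi> B"
    and one: "\<psi> (mat 1) = 1"
  shows "\<psi> T_mat ^ 12 = 1"
proof -
  define s where "s = \<psi> S_mat"
  define t where "t = \<psi> T_mat"
  have "\<psi> (S_mat ** S_mat ** S_mat ** S_mat) = s ^ 4"
    by (simp add: mult SL2Z_mult S_mat_SL2Z s_def eval_nat_numeral mult.assoc)
  then have "s ^ 4 = 1"
    by (simp add: S_mat_pow_4 one)
  moreover have "\<psi> ((S_mat ** T_mat) ** (S_mat ** T_mat) ** (S_mat ** T_mat)) = (s * t) ^ 3"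
    by (simp add: mult SL2Z_mult S_mat_SL2Z T_mat_SL2Z s_def t_def eval_nat_numeral mult.assoc)
  then have "s ^ 2 = (s * t) ^ 3"
    by (simp flip: S_mat_sq_eq_ST_cube add: mult S_mat_SL2Z s_def power2_eq_square)
  ultimately have "s * t ^ 3 = 1"
  proof -
    assume s4: "s ^ 4 = 1" and s2: "s ^ 2 = (s * t) ^ 3"
    have "s * t ^ 3 = s ^ 4 * (s * t ^ 3)"
      using s4 by simp
    also have "\<dots> = s ^ 2 * (s * t) ^ 3"
      by (simp add: power_mult_distrib eval_nat_numeral ac_simps)
    also have "\<dots> = s ^ 2 * s ^ 2"
      by (simp only: s2)
    also have "\<dots> = s ^ 4"
      by (simp flip: power_add)
    finally show ?thesis
      using s4 by simp
  qed
  then have "(s * t ^ 3) ^ 4 = 1"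
    by simp
  then show ?thesis
    using \<open>s ^ 4 = 1\<close> by (simp add: power_mult_distrib t_def flip: power_mult)
qed

lemma invariant_subspace_eigenvalue_product:
  fixes \<sigma> :: "int^2^2 \<Rightarrow> 'a::field^'n^'n"
  assumes mult: "\<And>A A'. A \<in> SL2Z \<Longrightarrow> A' \<in> SL2Z \<Longrightarrow> \<sigma> (A ** A') = \<sigma> A ** \<sigma> A'"
    and one: "\<sigma> (mat 1) = mat 1"
    and T: "\<sigma> T_mat = (\<chi> i j. if i = j then lam i else 0)"
    and W: "vec.subspace W" "\<And>g w. g \<in> SL2Z \<Longrightarrow> w \<in> W \<Longrightarrow> \<sigma> g *v w \<in> W"
    and nontrivial: "W \<noteq> {0}" "W \<noteq> UNIV"
  obtains K where "K \<noteq> {}" "K \<noteq> UNIV" "(\<Prod>i\<in>K. lam i) ^ 12 = 1"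
proof -
  obtain B K where B: "invertible B" "block_triangular (- K) B"
    and W_eq: "(\<lambda>v. B *v v) ` coord_subspace K = W"
    using subspace_adapted_basis[OF W(1)] .
  have B_inv: "B ** matrix_inv B = mat 1" "matrix_inv B ** B = mat 1"
    using B(1) by (simp_all add: matrix_inv_right matrix_inv_left)
  define N where "N g = matrix_inv B ** \<sigma> g ** B" for g
  have N_mult: "N (A ** A') = N A ** N A'" if "A \<in> SL2Z" "A' \<in> SL2Z" for A A'
  proof -
    have "N A ** N A' = matrix_inv B ** (\<sigma> A ** (B ** matrix_inv B) ** \<sigma> A') ** B"
      by (simp add: N_def matrix_mul_assoc)
    then show ?thesis
      by (simp add: B_inv N_def mult[OF that])
  qed
  have N_triangular: "block_triangular K (N g)" if g: "g \<in> SL2Z" for g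
  proof (rule block_triangularI_invariant)
    fix v :: "'a^'n" assume "v \<in> coord_subspace K"
    then have "\<sigma> g *v (B *v v) \<in> W"
      using W(2)[OF g] W_eq by blast
    then obtain u where u: "u \<in> coord_subspace K" "\<sigma> g *v (B *v v) = B *v u"
      using W_eq by auto
    have "N g *v v = matrix_inv B *v (\<sigma> g *v (B *v v))"
      by (simp add: N_def matrix_vector_mul_assoc matrix_mul_assoc)
    also have "\<dots> = u"
      unfolding u(2) by (simp add: matrix_vector_mul_assoc B_inv)
    finally show "N g *v v \<in> coord_subspace K"
      using u(1) by simp
  qed
  \<comment> \<open>the determinant of \<open>\<sigma> g\<close> restricted to \<open>W\<close>\<close>
  define \<psi> where "\<psi> g = det (principal_block K (N g))" for g
  have "\<psi> T_mat ^ 12 = 1"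
  proof (rule SL2Z_character_T_pow_12)
    show "\<psi> (A ** A') = \<psi> A * \<psi> A'" if "A \<in> SL2Z" "A' \<in> SL2Z" for A A'
      by (simp add: \<psi>_def N_mult[OF that] det_principal_block_mult N_triangular that(2))
    show "\<psi> (mat 1) = 1"
      by (simp add: \<psi>_def N_def one B_inv principal_block_mat_1)
  qed
  moreover have "\<psi> T_mat = (\<Prod>i\<in>K. lam i)"
    unfolding \<psi>_def
  proof (rule det_principal_block_similar_diagonal[OF B N_triangular[OF T_mat_SL2Z]])
    have "B ** N T_mat = (B ** matrix_inv B) ** \<sigma> T_mat ** B"
      by (simp add: N_def matrix_mul_assoc)
    then show "B ** N T_mat = (\<chi> i j. if i = j then lam i else 0) ** B"
      by (simp add: T B_inv)
  qed
  moreover have "K \<noteq> {}"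
    using nontrivial(1) W_eq by (auto simp: coord_subspace_empty)
  moreover have "K \<noteq> UNIV"
  proof
    assume "K = UNIV"
    have "y = B *v (matrix_inv B *v y)" for y
      by (simp add: matrix_vector_mul_assoc B_inv)
    then have "y \<in> W" for y
      using W_eq by (metis \<open>K = UNIV\<close> coord_subspace_UNIV rangeI)
    then show False
      using nontrivial(2) by auto
  qed
  ultimately show ?thesis
    using that by simp
qed

lemma is_rep_mat_1:
  assumes "is_rep \<rho>"
  shows "\<rho> (mat 1) = mat 1"
proof -
  have "invertible (\<rho> (mat 1))" and idem: "\<rho> (mat 1) ** \<rho> (mat 1) = \<rho> (mat 1)"
    using assms mat_1_SL2Z unfolding is_rep_def by (metis matrix_mul_lid)+
  have "\<rho> (mat 1) = (matrix_inv (\<rho> (mat 1)) ** \<rho> (mat 1)) ** \<rho> (mat 1)"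
    by (simp add: matrix_inv_left \<open>invertible (\<rho> (mat 1))\<close>)
  also have "\<dots> = matrix_inv (\<rho> (mat 1)) ** (\<rho> (mat 1) ** \<rho> (mat 1))"
    by (simp add: matrix_mul_assoc)
  also have "\<dots> = mat 1"
    by (simp add: idem matrix_inv_left \<open>invertible (\<rho> (mat 1))\<close>)
  finally show ?thesis .
qed

lemma matrix_conj_mult:
  fixes P :: "'a::semiring_1^'n^'n"
  assumes "invertible P"
  shows "P ** (M ** N) ** matrix_inv P = (P ** M ** matrix_inv P) ** (P ** N ** matrix_inv P)"
proof -
  have "(P ** M ** matrix_inv P) ** (P ** N ** matrix_inv P) = P ** M ** (matrix_inv P ** P) ** N ** matrix_inv P"
    by (simp add: matrix_mul_assoc)
  also have "\<dots> = P ** (M ** N) ** matrix_inv P"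
    by (simp add: matrix_inv_left[OF assms] matrix_mul_assoc)
  finally show ?thesis
    by (rule sym)
qed

lemma matrix_conj_vector_mult:
  fixes P :: "'a::comm_semiring_1^'n^'n"
  assumes "invertible P"
  shows "(P ** M ** matrix_inv P) *v (P *v x) = P *v (M *v x)"
proof -
  have "(P ** M ** matrix_inv P) *v (P *v x) = (P ** M ** (matrix_inv P ** P)) *v x"
    by (simp add: matrix_vector_mul_assoc matrix_mul_assoc)
  then show ?thesis
    by (simp add: matrix_inv_left[OF assms] matrix_vector_mul_assoc)
qed

theorem lemma5p2:
  fixes \<rho> :: "int^2^2 \<Rightarrow> complex^'n^'n"
    and lam :: "'n \<Rightarrow> complex"
    and P :: "complex^'n^'n"
  assumes rep: "is_rep \<rho>"
    and P_inv: "invertible P"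
    and diag: "P ** \<rho> T_mat ** matrix_inv P = (\<chi> i j. if i = j then lam i else 0)"
    and no_root: "\<And>I. I \<noteq> {} \<Longrightarrow> I \<noteq> UNIV \<Longrightarrow> (\<Prod>i\<in>I. lam i) ^ 12 \<noteq> 1"
  shows "irreducible_rep \<rho>"
  unfolding irreducible_rep_def
proof (intro allI impI)
  fix W :: "(complex^'n) set"
  assume "vec.subspace W \<and> (\<forall>g\<in>SL2Z. \<forall>w\<in>W. \<rho> g *v w \<in> W)"
  then have W: "vec.subspace W" "\<And>g w. g \<in> SL2Z \<Longrightarrow> w \<in> W \<Longrightarrow> \<rho> g *v w \<in> W"
    by auto
  have P_inj: "inj ((*v) P)"
    using matrix_left_invertible_injective matrix_inv_left[OF P_inv] by blast
  show "W = {0} \<or> W = UNIV"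
  proof (rule ccontr)
    assume proper: "\<not> (W = {0} \<or> W = UNIV)"
    obtain K where "K \<noteq> {}" "K \<noteq> UNIV" "(\<Prod>i\<in>K. lam i) ^ 12 = 1"
    proof (rule invariant_subspace_eigenvalue_product[of "\<lambda>g. P ** \<rho> g ** matrix_inv P" lam "(*v) P ` W"])
      show "P ** \<rho> (A ** A') ** matrix_inv P = (P ** \<rho> A ** matrix_inv P) ** (P ** \<rho> A' ** matrix_inv P)"
        if "A \<in> SL2Z" "A' \<in> SL2Z" for A A'
        using rep that by (simp add: is_rep_def matrix_conj_mult[OF P_inv])
      show "P ** \<rho> (mat 1) ** matrix_inv P = mat 1"
        by (simp add: is_rep_mat_1[OF rep] matrix_inv_right[OF P_inv])
      show "vec.subspace ((*v) P ` W)"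
        by (rule vec.subspace_image[OF W(1)])
      show "(P ** \<rho> g ** matrix_inv P) *v v \<in> (*v) P ` W" if "g \<in> SL2Z" "v \<in> (*v) P ` W" for g v
        using that W(2) by (auto simp: matrix_conj_vector_mult[OF P_inv])
      show "(*v) P ` W \<noteq> {0}"
        using proper P_inj by (metis image_empty image_insert inj_image_eq_iff matrix_vector_mult_0_right)
      show "(*v) P ` W \<noteq> UNIV"
        using proper P_inj by (metis UNIV_I UNIV_eq_I inj_image_mem_iff)
    qed (use diag in simp_all)
    then show False
      using no_root by blast
  qed
qed

end
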